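(* Let $n\ge 1$ and let $\alpha\in IS_n$ be a non-zero idempotent of rank $k$ (i.e. $|\operatorname{im}\alpha|=k$). Then the degree of the vertex $L_\alpha$ in $\mathcal{SP}_L(IS_n)$ equals $2^n-2^{n-k}-1$.
   Context: $IS_n$ is the set of all partial injective maps of an $n$-element set $X$, with composition written left to right ($\alpha\beta$ means first $\alpha$, then $\beta$); its zero is the empty map; its idempotents are the partial identities on subsets of $X$. For $a\in IS_n$, $S^1a=\{sa:s\in IS_n\}\cup\{a\}$. $\mathcal{P}_L(IS_n)$ is the simple graph on the non-empty partial injections with distinct $a,b$ adjacent iff $S^1a\cap S^1b$ contains a non-empty map. $L_a$ is the Green $\mathcal{L}$-class of $a$ ($a\,\mathcal{L}\,b$ iff $S^1a=S^1b$). $\mathcal{SP}_L(IS_n)$ is the simple graph with vertex set $\{L_a: a \text{ non-empty}\}$, distinct $L_a,L_b$ adjacent iff $a,b$ are adjacent in $\mathcal{P}_L(IS_n)$. *)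

theory Defs
  imports Main
begin

text \<open>Partial injective maps of the n-element set X = {0..<n}, as partial functions.\<close>

type_synonym pinj = "nat \<rightharpoonup> nat"

definition IS :: "nat \<Rightarrow> pinj set" where
  "IS n = {f. dom f \<subseteq> {..<n} \<and> ran f \<subseteq> {..<n} \<and> inj_on f (dom f)}"

text \<open>Left-to-right composition: pcomp a b means first a, then b.\<close>
definition pcomp :: "pinj \<Rightarrow> pinj \<Rightarrow> pinj" where
  "pcomp a b = b \<circ>\<^sub>m a"

definition S1 :: "nat \<Rightarrow> pinj \<Rightarrow> pinj set" where
  "S1 n a = {pcomp s a | s. s \<in> IS n} \<union> {a}"

definition PL_adj :: "nat \<Rightarrow> pinj \<Rightarrow> pinj \<Rightarrow> bool" where
  "PL_adj n a b \<longleftrightarrow> a \<in> IS n \<and> b \<in> IS n \<and> a \<noteq> Map.empty \<and> b \<noteq> Map.empty \<and> a \<noteq> b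
     \<and> (\<exists>c \<in> S1 n a \<inter> S1 n b. c \<noteq> Map.empty)"

definition Lclass :: "nat \<Rightarrow> pinj \<Rightarrow> pinj set" where
  "Lclass n a = {b \<in> IS n. S1 n b = S1 n a}"

definition SP_vertices :: "nat \<Rightarrow> pinj set set" where
  "SP_vertices n = {Lclass n a | a. a \<in> IS n \<and> a \<noteq> Map.empty}"

definition SP_adj :: "nat \<Rightarrow> pinj set \<Rightarrow> pinj set \<Rightarrow> bool" where
  "SP_adj n X Y \<longleftrightarrow> X \<in> SP_vertices n \<and> Y \<in> SP_vertices n \<and> X \<noteq> Y
     \<and> (\<exists>a \<in> X. \<exists>b \<in> Y. PL_adj n a b)"

definition SP_degree :: "nat \<Rightarrow> pinj set \<Rightarrow> nat" where
  "SP_degree n X = card {Y. SP_adj n X Y}"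

end

theory Submission
  imports Defs
begin

text \<open>
  In \<open>IS\<^sub>n\<close> the left ideal \<open>S\<^sup>1a\<close> consists exactly of the maps whose image lies in
  \<open>im a\<close>, so \<open>L\<^sub>a\<close> is determined by \<open>im a\<close>, and two non-zero maps are adjacent in
  \<open>\<P>\<^sub>L\<close> iff their images meet (a common point \<open>y\<close> gives the common element \<open>{y \<mapsto> y}\<close>).
  Hence \<open>\<S>\<P>\<^sub>L(IS\<^sub>n)\<close> is the intersection graph of the non-empty subsets of \<open>X\<close>, and the
  neighbours of \<open>L\<^sub>\<alpha>\<close> correspond to the subsets \<open>B \<noteq> im \<alpha>\<close> meeting \<open>im \<alpha>\<close>, of which there
  are \<open>2\<^sup>n - 2\<^sup>n\<^sup>-\<^sup>k - 1\<close>.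
\<close>

lemma ran_IS: "a \<in> IS n \<Longrightarrow> ran a \<subseteq> {..<n}"
  by (auto simp: IS_def)

lemma ran_eq_empty_iff: "ran a = {} \<longleftrightarrow> a = Map.empty"
  by (auto simp: ran_def) (metis not_None_eq)

lemma restrict_Some_in_IS: "B \<subseteq> {..<n} \<Longrightarrow> Some |` B \<in> IS n"
  by (auto simp: IS_def restrict_map_def ran_def inj_on_def split: if_splits)

lemma ran_restrict_Some: "ran (Some |` B) = B"
  by (auto simp: restrict_map_def ran_def split: if_splits)

lemma pcomp_in_IS:
  assumes a: "a \<in> IS n" and b: "b \<in> IS n"
  shows "pcomp a b \<in> IS n"
  unfolding IS_def
proof (intro CollectI conjI)
  show "dom (pcomp a b) \<subseteq> {..<n}" using a
    unfolding IS_def pcomp_def dom_def by (force simp: map_comp_Some_iff)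
  show "ran (pcomp a b) \<subseteq> {..<n}" using b
    unfolding IS_def pcomp_def ran_def by (force simp: map_comp_Some_iff)
  have "inj_on a (dom a)" "inj_on b (dom b)" using a b by (auto simp: IS_def)
  then show "inj_on (pcomp a b) (dom (pcomp a b))"
    unfolding pcomp_def inj_on_def by (auto simp: map_comp_Some_iff) (metis domI option.inject)
qed

lemma pcomp_assoc: "pcomp t (pcomp s b) = pcomp (pcomp t s) b"
  unfolding pcomp_def by (rule ext) (auto simp: map_comp_def split: option.splits)

lemma ran_pcomp_subset: "ran (pcomp s a) \<subseteq> ran a"
  unfolding pcomp_def ran_def by (auto simp: map_comp_Some_iff)

lemma ran_subset_if_in_S1: "f \<in> S1 n a \<Longrightarrow> ran f \<subseteq> ran a"
  unfolding S1_def using ran_pcomp_subset by auto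

text \<open>The left factor sends \<open>x\<close> to some \<open>b\<close>-preimage of \<open>a x\<close>; it is injective because
  \<open>a\<close> is.\<close>
lemma left_factor_if_ran_subset:
  assumes a: "a \<in> IS n" and b: "b \<in> IS n" and ran_sub: "ran a \<subseteq> ran b"
  obtains s where "s \<in> IS n" "pcomp s b = a"
proof -
  define g where "g y = (SOME z. b z = Some y)" for y
  define s where "s x = map_option g (a x)" for x
  have b_g: "b (g y) = Some y" if y: "y \<in> ran a" for y
  proof -
    obtain z where "b z = Some y"
      using y ran_sub by (auto simp: ran_def)
    then show ?thesis unfolding g_def by (rule someI)
  qed
  have inj_g: "inj_on g (ran a)"
    by (rule inj_onI) (metis b_g option.inject)
  have "pcomp s b x = a x" for x
    by (cases "a x") (auto simp: pcomp_def s_def b_g ranI)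
  then have "pcomp s b = a" ..
  moreover have "s \<in> IS n"
    unfolding IS_def
  proof (intro CollectI conjI)
    have dom_s: "dom s = dom a" by (auto simp: s_def)
    then show "dom s \<subseteq> {..<n}" using a by (simp add: IS_def)
    show "ran s \<subseteq> {..<n}"
      using b b_g by (force simp: IS_def s_def ran_def)
    have "inj_on a (dom a)" using a by (simp add: IS_def)
    then show "inj_on s (dom s)"
      using inj_g unfolding dom_s inj_on_def s_def by (auto simp: ranI) (metis domI ranI)
  qed
  ultimately show thesis by (rule that[rotated])
qed

lemma S1_mono_ran:
  assumes a: "a \<in> IS n" and b: "b \<in> IS n" and ran_sub: "ran a \<subseteq> ran b"
  shows "S1 n a \<subseteq> S1 n b"
proof
  obtain s where s: "s \<in> IS n" "pcomp s b = a"
    using left_factor_if_ran_subset[OF a b ran_sub] .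
  fix f assume "f \<in> S1 n a"
  then consider "f = a" | t where "t \<in> IS n" "f = pcomp t a" unfolding S1_def by blast
  then show "f \<in> S1 n b"
  proof cases
    case 1 then show ?thesis using s unfolding S1_def by blast
  next
    case 2 then show ?thesis using s pcomp_in_IS[of t n s] pcomp_assoc[of t s b]
      unfolding S1_def by auto
  qed
qed

lemma S1_eq_iff_ran_eq:
  assumes "a \<in> IS n" "b \<in> IS n"
  shows "S1 n a = S1 n b \<longleftrightarrow> ran a = ran b"
proof
  assume "S1 n a = S1 n b"
  then have "a \<in> S1 n b" "b \<in> S1 n a" unfolding S1_def by auto
  then show "ran a = ran b" using ran_subset_if_in_S1 by blast
next
  assume "ran a = ran b"
  then show "S1 n a = S1 n b" using S1_mono_ran assms by blast
qed

lemma Lclass_conv_ran: "a \<in> IS n \<Longrightarrow> Lclass n a = {b \<in> IS n. ran b = ran a}"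
  unfolding Lclass_def using S1_eq_iff_ran_eq by blast

lemma Lclass_eq_iff_ran_eq:
  "a \<in> IS n \<Longrightarrow> b \<in> IS n \<Longrightarrow> Lclass n a = Lclass n b \<longleftrightarrow> ran a = ran b"
  by (auto simp: Lclass_conv_ran)

lemma Lclass_eq_Lclass_restrict_Some: "a \<in> IS n \<Longrightarrow> Lclass n a = Lclass n (Some |` ran a)"
  using Lclass_eq_iff_ran_eq restrict_Some_in_IS ran_IS ran_restrict_Some by metis

lemma ran_inter_nonempty_if_PL_adj:
  assumes "PL_adj n a b"
  shows "ran a \<inter> ran b \<noteq> {}"
proof -
  obtain c where c: "c \<in> S1 n a" "c \<in> S1 n b" "c \<noteq> Map.empty"
    using assms unfolding PL_adj_def by blast
  then have "ran c \<noteq> {}" by (simp add: ran_eq_empty_iff)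
  with c show ?thesis using ran_subset_if_in_S1 by blast
qed

lemma PL_adj_if_ran_inter_nonempty:
  assumes a: "a \<in> IS n" and b: "b \<in> IS n" and "a \<noteq> Map.empty" "b \<noteq> Map.empty" "a \<noteq> b"
    and "ran a \<inter> ran b \<noteq> {}"
  shows "PL_adj n a b"
proof -
  obtain y where y: "y \<in> ran a" "y \<in> ran b" using assms(6) by blast
  define c :: pinj where "c = [y \<mapsto> y]"
  have c: "c \<in> IS n" using y ran_IS[OF a] by (auto simp: c_def IS_def)
  have "c \<in> S1 n f" if f: "f \<in> IS n" "y \<in> ran f" for f
  proof -
    obtain s where "s \<in> IS n" "pcomp s f = c"
      using left_factor_if_ran_subset[OF c f(1)] f(2) by (auto simp: c_def)
    then show ?thesis unfolding S1_def by blast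
  qed
  then have "c \<in> S1 n a \<inter> S1 n b" using a b y by blast
  moreover have "c \<noteq> Map.empty" by (simp add: c_def)
  ultimately show ?thesis using assms unfolding PL_adj_def by blast
qed

lemma SP_adj_Lclass_iff:
  assumes a: "a \<in> IS n" "a \<noteq> Map.empty" and b: "b \<in> IS n" "b \<noteq> Map.empty"
  shows "SP_adj n (Lclass n a) (Lclass n b) \<longleftrightarrow> ran a \<noteq> ran b \<and> ran a \<inter> ran b \<noteq> {}"
proof
  assume adj: "SP_adj n (Lclass n a) (Lclass n b)"
  then obtain a' b' where "a' \<in> Lclass n a" "b' \<in> Lclass n b" "PL_adj n a' b'"
    unfolding SP_adj_def by blast
  then have "ran a' = ran a" "ran b' = ran b" "ran a' \<inter> ran b' \<noteq> {}"
    using ran_inter_nonempty_if_PL_adj Lclass_conv_ran a b by blast+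
  then have "ran a \<inter> ran b \<noteq> {}" by simp
  moreover have "ran a \<noteq> ran b"
    using adj Lclass_eq_iff_ran_eq a b unfolding SP_adj_def by blast
  ultimately show "ran a \<noteq> ran b \<and> ran a \<inter> ran b \<noteq> {}" by blast
next
  assume ran: "ran a \<noteq> ran b \<and> ran a \<inter> ran b \<noteq> {}"
  then have "PL_adj n a b" using PL_adj_if_ran_inter_nonempty a b by blast
  moreover have "a \<in> Lclass n a" "b \<in> Lclass n b" using a b by (auto simp: Lclass_def)
  ultimately show "SP_adj n (Lclass n a) (Lclass n b)"
    using ran a b Lclass_eq_iff_ran_eq unfolding SP_adj_def SP_vertices_def by blast
qed

lemma SP_neighbours_Lclass:
  assumes a: "a \<in> IS n" "a \<noteq> Map.empty"
  shows "{Y. SP_adj n (Lclass n a) Y}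
    = (\<lambda>B. Lclass n (Some |` B)) ` {B. B \<subseteq> {..<n} \<and> B \<noteq> ran a \<and> B \<inter> ran a \<noteq> {}}"
    (is "?N = ?F ` ?S")
proof (intro set_eqI iffI)
  fix Y assume "Y \<in> ?N"
  then obtain b where b: "b \<in> IS n" "b \<noteq> Map.empty" "Y = Lclass n b"
    and adj: "SP_adj n (Lclass n a) (Lclass n b)"
    unfolding SP_adj_def SP_vertices_def by auto
  have "ran b \<in> ?S" using adj SP_adj_Lclass_iff[OF a b(1,2)] ran_IS[OF b(1)] by blast
  moreover have "Y = ?F (ran b)" using b Lclass_eq_Lclass_restrict_Some by blast
  ultimately show "Y \<in> ?F ` ?S" by blast
next
  fix Y assume "Y \<in> ?F ` ?S"
  then obtain B where B: "B \<in> ?S" "Y = ?F B" by blast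
  have "Some |` B \<in> IS n" "Some |` B \<noteq> Map.empty"
    using B restrict_Some_in_IS ran_restrict_Some[of B] by (auto simp flip: ran_eq_empty_iff)
  then show "Y \<in> ?N"
    using B SP_adj_Lclass_iff[OF a] ran_restrict_Some[of B] by auto
qed

lemma card_subsets_meeting:
  assumes fin: "finite U" and A: "A \<subseteq> U" "A \<noteq> {}"
  shows "card {B. B \<subseteq> U \<and> B \<noteq> A \<and> B \<inter> A \<noteq> {}} = 2 ^ card U - 2 ^ (card U - card A) - 1"
proof -
  have "{B. B \<subseteq> U \<and> B \<noteq> A \<and> B \<inter> A \<noteq> {}} = (Pow U - Pow (U - A)) - {A}" by auto
  moreover have "card (Pow U - Pow (U - A)) = 2 ^ card U - 2 ^ (card U - card A)"
  proof -
    have "card (U - A) = card U - card A" using fin A by (simp add: card_Diff_subset finite_subset)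
    moreover have "Pow (U - A) \<subseteq> Pow U" by blast
    ultimately show ?thesis using fin by (simp add: card_Diff_subset card_Pow)
  qed
  moreover have "A \<in> Pow U - Pow (U - A)" using A by auto
  ultimately show ?thesis by (simp add: card_Diff_singleton fin)
qed

lemma SP_degree_Lclass:
  assumes "a \<in> IS n" "a \<noteq> Map.empty"
  shows "SP_degree n (Lclass n a) = 2 ^ n - 2 ^ (n - card (ran a)) - 1"
proof -
  let ?S = "{B. B \<subseteq> {..<n} \<and> B \<noteq> ran a \<and> B \<inter> ran a \<noteq> {}}"
  have "inj_on (\<lambda>B. Lclass n (Some |` B)) ?S"
    by (rule inj_onI) (metis (no_types, lifting) Lclass_eq_iff_ran_eq mem_Collect_eq
        ran_restrict_Some restrict_Some_in_IS)
  then have "SP_degree n (Lclass n a) = card ?S"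
    unfolding SP_degree_def SP_neighbours_Lclass[OF assms] by (rule card_image)
  also have "\<dots> = 2 ^ n - 2 ^ (n - card (ran a)) - 1"
    using card_subsets_meeting[of "{..<n}" "ran a"] ran_IS assms
    by (simp add: ran_eq_empty_iff)
  finally show ?thesis .
qed

theorem mainTheorem14:
  fixes n k :: nat and \<alpha> :: pinj
  assumes "n \<ge> 1"
    and "\<alpha> \<in> IS n"
    and "\<alpha> \<noteq> Map.empty"
    and "pcomp \<alpha> \<alpha> = \<alpha>"
    and "card (ran \<alpha>) = k"
  shows "SP_degree n (Lclass n \<alpha>) = 2 ^ n - 2 ^ (n - k) - 1"
  using SP_degree_Lclass[OF assms(2,3)] assms(5) by simp

end
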